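(* Let $f:\mathbb R^n\to\mathbb R$ be continuously differentiable, $A\in\mathbb R^{q\times n}$, $b\in\mathbb R^q$, and $c=(c_1,\dots,c_p):\mathbb R^n\to\mathbb R^p$ with each $c_i$ concave and twice continuously differentiable. For each $\varepsilon>0$ let $(x(\varepsilon),y(\varepsilon),z^I(\varepsilon))\in\mathbb R^{n+q+2p}$ be a stationary point of $\mathrm P_\varepsilon$ with multiplier $\lambda(\varepsilon)\in\mathbb R^n$. Let $(x^*,y^*,[z^I]^*,\lambda^* )$ be any point of $\limsup_{\varepsilon\searrow0}\{(x(\varepsilon),y(\varepsilon),z^I(\varepsilon),\lambda(\varepsilon))\}$, and let $\beta=\{i:[y^I]^*_i=0=[z^I]^*_i\}$, $\gamma=\{i:[y^I]^*_i>0=[z^I]^*_i\}$. Then there exists $\eta_\beta\in[0,1]^{|\beta|}$ such that $$\nabla f(x^* )+\Big[\sum_{j=1}^p[y^I]^*_j\nabla^2c_j(x^* )-A^TA-\mathcal Jc_\gamma(x^* )^T\mathcal Jc_\gamma(x^* )-\mathcal Jc_\beta(x^* )^T\mathrm{Diag}(\eta_\beta)\mathcal Jc_\beta(x^* )\Big]\lambda^*=0.$$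
   Context: $\mathcal Jc(x)$ is the $p\times n$ Jacobian of $c$; for an index set $\beta$, $c_\beta=(c_i)_{i\in\beta}$ with Jacobian $\mathcal Jc_\beta$. $G(x,y,z^I)=\big(A^Ty^E+\mathcal Jc(x)^Ty^I,\ Ax-b+y^E,\ c(x)+y^I-z^I\big)$, $y=(y^E,y^I)\in\mathbb R^q\times\mathbb R^p$. $\psi_\varepsilon(a,b)=a+b-\sqrt{a^2+b^2+2\varepsilon^2}$, $\Psi_\varepsilon(y^I,z^I)=(\psi_\varepsilon(y^I_i,z^I_i))_{i=1}^p$, $\Theta(\varepsilon)=\{(y^I,z^I):\Psi_\varepsilon(y^I,z^I)=0\}$, and $\mathcal J_{z^I}\Psi_\varepsilon(y^I,z^I)=\mathrm{Diag}\big(1-z^I_i/\sqrt{(y^I_i)^2+(z^I_i)^2+2\varepsilon^2}\big)$. Problem $\mathrm P_\varepsilon$ is $\min f(x)$ s.t. $G(x,y,z^I)=0$, $(y^I,z^I)\in\Theta(\varepsilon)$. A feasible point $(x,y,z^I)$ of $\mathrm P_\varepsilon$ is a stationary point of $\mathrm P_\varepsilon$ with multiplier $\lambda\in\mathbb R^n$ if $\nabla f(x)+\big[\sum_{i=1}^p y^I_i\nabla^2c_i(x)-A^TA-\mathcal Jc(x)^T\mathcal J_{z^I}\Psi_\varepsilon(y^I,z^I)\mathcal Jc(x)\big]\lambda=0$. $\mathrm{Diag}(v)$ is the diagonal matrix with diagonal $v$. *)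

theory Defs
  imports "HOL-Analysis.Analysis"
begin

definition jac :: "(real^'n \<Rightarrow> real^'m) \<Rightarrow> real^'n \<Rightarrow> real^'n^'m" where
  "jac F x = (\<chi> i j. frechet_derivative (\<lambda>y. F y $ i) (at x) (axis j 1))"

definition grad :: "(real^'n \<Rightarrow> real) \<Rightarrow> real^'n \<Rightarrow> real^'n" where
  "grad g x = (\<chi> j. frechet_derivative g (at x) (axis j 1))"

definition hess :: "(real^'n \<Rightarrow> real) \<Rightarrow> real^'n \<Rightarrow> real^'n^'n" where
  "hess g x = jac (grad g) x"

definition Diag :: "real^'p \<Rightarrow> real^'p^'p" where
  "Diag v = (\<chi> i j. if i = j then v $ i else 0)"

text \<open>Rows of M indexed by S, other rows set to zero; so
  (rowsub S M)^T ** N ** rowsub S M equals M_S^T N_S M_S for the submatrix M_S.\<close>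
definition rowsub :: "'p set \<Rightarrow> real^'n^'p \<Rightarrow> real^'n^'p" where
  "rowsub S M = (\<chi> i j. if i \<in> S then M $ i $ j else 0)"

definition psi :: "real \<Rightarrow> real \<Rightarrow> real \<Rightarrow> real" where
  "psi e a b = a + b - sqrt (a\<^sup>2 + b\<^sup>2 + 2 * e\<^sup>2)"

text \<open>Diagonal entries of J_{z^I} Psi_eps(y^I,z^I).\<close>
definition dPsi_z :: "real \<Rightarrow> real^'p \<Rightarrow> real^'p \<Rightarrow> real^'p" where
  "dPsi_z e yI zI = (\<chi> i. 1 - zI $ i / sqrt ((yI $ i)\<^sup>2 + (zI $ i)\<^sup>2 + 2 * e\<^sup>2))"

definition feasible_P ::
  "real \<Rightarrow> real^'n^'q \<Rightarrow> real^'q \<Rightarrow> (real^'n \<Rightarrow> real^'p)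
   \<Rightarrow> real^'n \<Rightarrow> real^'q \<Rightarrow> real^'p \<Rightarrow> real^'p \<Rightarrow> bool" where
  "feasible_P e A b c x yE yI zI \<longleftrightarrow>
     transpose A *v yE + transpose (jac c x) *v yI = 0 \<and>
     A *v x - b + yE = 0 \<and>
     c x + yI - zI = 0 \<and>
     (\<forall>i. psi e (yI $ i) (zI $ i) = 0)"

definition stationary_P ::
  "real \<Rightarrow> (real^'n \<Rightarrow> real) \<Rightarrow> real^'n^'q \<Rightarrow> real^'q \<Rightarrow> (real^'n \<Rightarrow> real^'p)
   \<Rightarrow> real^'n \<Rightarrow> real^'q \<Rightarrow> real^'p \<Rightarrow> real^'p \<Rightarrow> real^'n \<Rightarrow> bool" where
  "stationary_P e f A b c x yE yI zI lam \<longleftrightarrow>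
     feasible_P e A b c x yE yI zI \<and>
     grad f x + ((\<Sum>i\<in>UNIV. yI $ i *\<^sub>R hess (\<lambda>u. c u $ i) x)
                 - transpose A ** A
                 - transpose (jac c x) ** Diag (dPsi_z e yI zI) ** jac c x) *v lam = 0"

end

theory Submission
  imports Defs
begin

text \<open>
  On \<open>\<Theta>(\<epsilon>)\<close> the equation \<open>\<psi>\<^sub>\<epsilon>(y, z) = 0\<close> forces \<open>y, z > 0\<close> with \<open>y z = \<epsilon>\<^sup>2\<close>,
  and then the diagonal entries of \<open>\<J>\<^sub>z\<Psi>\<^sub>\<epsilon>\<close> are \<open>y / (y + z) \<in> [0, 1]\<close>.
  Along a subsequence these entries converge to some \<open>\<eta>\<close>, and continuity of the data turns
  the stationarity equations into the limit equation with \<open>Diag \<eta>\<close> in place of \<open>\<J>\<^sub>z\<Psi>\<^sub>\<epsilon>\<close>.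
  In the limit \<open>y\<^sup>* z\<^sup>* = 0\<close>, so \<open>\<eta>\<^sub>i = 1\<close> on \<open>\<gamma>\<close> and \<open>\<eta>\<^sub>i = 0\<close> where \<open>z\<^sup>*\<^sub>i > 0\<close>;
  only the entries on \<open>\<beta>\<close> remain free in \<open>[0, 1]\<close>.
\<close>

lemma tendsto_matrix_vector_mult:
  fixes M :: "nat \<Rightarrow> real^'n^'m"
  assumes "M \<longlonglongrightarrow> M0" and "v \<longlonglongrightarrow> v0"
  shows "(\<lambda>k. M k *v v k) \<longlonglongrightarrow> M0 *v v0"
  unfolding matrix_vector_mult_def by (intro tendsto_intros assms)

lemma tendsto_matrix_matrix_mult:
  fixes M :: "nat \<Rightarrow> real^'n^'m" and N :: "nat \<Rightarrow> real^'k^'n"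
  assumes "M \<longlonglongrightarrow> M0" and "N \<longlonglongrightarrow> N0"
  shows "(\<lambda>k. M k ** N k) \<longlonglongrightarrow> M0 ** N0"
  unfolding matrix_matrix_mult_def by (intro tendsto_intros assms)

lemma tendsto_transpose:
  fixes M :: "nat \<Rightarrow> real^'n^'m"
  assumes "M \<longlonglongrightarrow> M0"
  shows "(\<lambda>k. transpose (M k)) \<longlonglongrightarrow> transpose M0"
  unfolding transpose_def by (intro tendsto_intros assms)

lemma tendsto_Diag:
  fixes v :: "nat \<Rightarrow> real^'n"
  assumes "v \<longlonglongrightarrow> v0"
  shows "(\<lambda>k. Diag (v k)) \<longlonglongrightarrow> Diag v0"
  unfolding Diag_def using assms by (auto intro!: tendsto_intros)

lemma isCont_jac:
  assumes "\<And>i. isCont (grad (\<lambda>v. c v $ i)) x"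
  shows "isCont (jac c) x"
proof -
  have "jac c = (\<lambda>u. \<chi> i. grad (\<lambda>v. c v $ i) u)"
    by (simp add: fun_eq_iff vec_eq_iff jac_def grad_def)
  then show ?thesis
    using assms by (simp add: continuous_at tendsto_vec_lambda)
qed

lemma psi_eq_0D:
  fixes e y z :: real
  assumes "e > 0" and "psi e y z = 0"
  shows "0 < y" "0 < z" "y * z = e\<^sup>2"
proof -
  have root: "sqrt (y\<^sup>2 + z\<^sup>2 + 2 * e\<^sup>2) = y + z"
    using assms(2) by (simp add: psi_def)
  have "0 \<le> y + z"
    unfolding root[symmetric] by simp
  have "(y + z)\<^sup>2 = y\<^sup>2 + z\<^sup>2 + 2 * e\<^sup>2"
    unfolding root[symmetric] by simp
  then show prod: "y * z = e\<^sup>2"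
    by (simp add: power2_eq_square algebra_simps)
  with assms(1) have "0 < y * z"
    by simp
  with \<open>0 \<le> y + z\<close> show "0 < y" "0 < z"
    by (auto simp: zero_less_mult_iff)
qed

lemma dPsi_z_nth_on_Theta:
  assumes "e > 0" and "psi e (yI $ i) (zI $ i) = 0"
  shows "dPsi_z e yI zI $ i = yI $ i / (yI $ i + zI $ i)"
proof -
  have "sqrt ((yI $ i)\<^sup>2 + (zI $ i)\<^sup>2 + 2 * e\<^sup>2) = yI $ i + zI $ i"
    using assms(2) by (simp add: psi_def)
  moreover have "0 < yI $ i + zI $ i"
    using psi_eq_0D[OF assms] by simp
  ultimately show ?thesis
    by (simp add: dPsi_z_def field_simps)
qed

lemma dPsi_z_mem_unit_box:
  assumes "e > 0" and "\<And>i. psi e (yI $ i) (zI $ i) = 0"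
  shows "dPsi_z e yI zI \<in> cbox 0 1"
  unfolding mem_box_cart
proof
  fix i
  have "0 < yI $ i" "0 < zI $ i"
    using psi_eq_0D[OF assms(1,2)] by auto
  then show "0 $ i \<le> dPsi_z e yI zI $ i \<and> dPsi_z e yI zI $ i \<le> 1 $ i"
    by (simp add: dPsi_z_nth_on_Theta[OF assms(1,2)])
qed

lemma complementarity_limit:
  fixes y z :: "nat \<Rightarrow> real"
  assumes "\<And>k. 0 < y k" and "\<And>k. 0 < z k" and "(\<lambda>k. y k * z k) \<longlonglongrightarrow> 0"
    and "y \<longlonglongrightarrow> a" and "z \<longlonglongrightarrow> b"
  shows "0 \<le> a" "0 \<le> b" "a * b = 0"
proof -
  show "0 \<le> a"
    using assms(1) by (intro LIMSEQ_le_const[OF assms(4)]) (auto intro: less_imp_le)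
  show "0 \<le> b"
    using assms(2) by (intro LIMSEQ_le_const[OF assms(5)]) (auto intro: less_imp_le)
  have "(\<lambda>k. y k * z k) \<longlonglongrightarrow> a * b"
    using assms by (intro tendsto_mult)
  with assms(3) show "a * b = 0"
    using LIMSEQ_unique by blast
qed

lemma dPsi_z_limit:
  fixes Y Z :: "nat \<Rightarrow> real^'p"
  assumes e: "\<And>k. 0 < e k" "e \<longlonglongrightarrow> 0"
    and Theta: "\<And>k i. psi (e k) (Y k $ i) (Z k $ i) = 0"
    and Y: "Y \<longlonglongrightarrow> ys" and Z: "Z \<longlonglongrightarrow> zs"
    and D: "(\<lambda>k. dPsi_z (e k) (Y k) (Z k)) \<longlonglongrightarrow> \<eta>"
  shows "0 < ys $ i \<Longrightarrow> zs $ i = 0 \<Longrightarrow> \<eta> $ i = 1"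
    and "\<not> (ys $ i = 0 \<and> zs $ i = 0) \<Longrightarrow> \<not> (0 < ys $ i \<and> zs $ i = 0) \<Longrightarrow> \<eta> $ i = 0"
proof -
  have pos: "0 < Y k $ i" "0 < Z k $ i" "Y k $ i * Z k $ i = (e k)\<^sup>2" for k
    using psi_eq_0D[OF e(1) Theta] by auto
  have "(\<lambda>k. (e k)\<^sup>2) \<longlonglongrightarrow> 0"
    using tendsto_power[OF e(2), of 2] by simp
  then have compl: "0 \<le> ys $ i" "0 \<le> zs $ i" "ys $ i * zs $ i = 0"
    using complementarity_limit[OF pos(1,2) _ tendsto_vec_nth[OF Y] tendsto_vec_nth[OF Z]] pos(3)
    by simp_all
  have ratio: "\<eta> $ i = ys $ i / (ys $ i + zs $ i)" if "ys $ i + zs $ i \<noteq> 0"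
  proof -
    have "(\<lambda>k. Y k $ i / (Y k $ i + Z k $ i)) \<longlonglongrightarrow> ys $ i / (ys $ i + zs $ i)"
      using that Y Z by (intro tendsto_intros)
    moreover have "(\<lambda>k. Y k $ i / (Y k $ i + Z k $ i)) \<longlonglongrightarrow> \<eta> $ i"
      using tendsto_vec_nth[OF D, of i] by (simp add: dPsi_z_nth_on_Theta[OF e(1) Theta])
    ultimately show ?thesis
      using LIMSEQ_unique by blast
  qed
  show "\<eta> $ i = 1" if "0 < ys $ i" "zs $ i = 0"
    using that ratio by simp
  show "\<eta> $ i = 0" if "\<not> (ys $ i = 0 \<and> zs $ i = 0)" "\<not> (0 < ys $ i \<and> zs $ i = 0)"
    using that compl ratio by auto
qed

definition stationarity_residual ::
  "(real^'n \<Rightarrow> real) \<Rightarrow> real^'n^'q \<Rightarrow> (real^'n \<Rightarrow> real^'p)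
   \<Rightarrow> real^'n \<Rightarrow> real^'p \<Rightarrow> real^'p \<Rightarrow> real^'n \<Rightarrow> real^'n" where
  "stationarity_residual f A c x yI d lam =
     grad f x + ((\<Sum>i\<in>UNIV. yI $ i *\<^sub>R hess (\<lambda>u. c u $ i) x)
                 - transpose A ** A
                 - transpose (jac c x) ** Diag d ** jac c x) *v lam"

lemma stationary_P_iff_residual:
  "stationary_P e f A b c x yE yI zI lam \<longleftrightarrow>
     feasible_P e A b c x yE yI zI \<and> stationarity_residual f A c x yI (dPsi_z e yI zI) lam = 0"
  by (simp add: stationary_P_def stationarity_residual_def)

lemma tendsto_stationarity_residual:
  assumes "isCont (grad f) x0" and "\<And>i. isCont (hess (\<lambda>u. c u $ i)) x0" and "isCont (jac c) x0"
    and "X \<longlonglongrightarrow> x0" and "Y \<longlonglongrightarrow> y0" and "D \<longlonglongrightarrow> d0" and "L \<longlonglongrightarrow> lam0"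
  shows "(\<lambda>k. stationarity_residual f A c (X k) (Y k) (D k) (L k))
           \<longlonglongrightarrow> stationarity_residual f A c x0 y0 d0 lam0"
proof -
  have "(\<lambda>k. grad f (X k)) \<longlonglongrightarrow> grad f x0" "(\<lambda>k. jac c (X k)) \<longlonglongrightarrow> jac c x0"
    "\<And>i. (\<lambda>k. hess (\<lambda>u. c u $ i) (X k)) \<longlonglongrightarrow> hess (\<lambda>u. c u $ i) x0"
    using assms(1-4) by (auto intro: isCont_tendsto_compose)
  then show ?thesis
    unfolding stationarity_residual_def
    by (intro tendsto_intros tendsto_matrix_vector_mult tendsto_matrix_matrix_mult
          tendsto_transpose tendsto_Diag assms(5-7))
qed

lemma transpose_Diag_mult_split_rowsub:
  fixes J :: "real^'n^'p"
  assumes "\<And>i. i \<in> G \<Longrightarrow> v $ i = 1" and "\<And>i. i \<notin> B \<Longrightarrow> i \<notin> G \<Longrightarrow> v $ i = 0"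
    and "B \<inter> G = {}"
  shows "transpose J ** Diag v ** J =
    transpose (rowsub G J) ** rowsub G J + transpose (rowsub B J) ** Diag v ** rowsub B J"
proof -
  have "J $ i $ a * v $ i * J $ i $ b =
      rowsub G J $ i $ a * rowsub G J $ i $ b + rowsub B J $ i $ a * v $ i * rowsub B J $ i $ b"
    for i a b
    using assms by (auto simp: rowsub_def)
  then show ?thesis
    by (simp add: vec_eq_iff matrix_matrix_mult_def transpose_def Diag_def if_distrib
        sum.distrib[symmetric] cong: if_cong)
qed

lemma stationarity_residual_limit_eq_0:
  assumes "isCont (grad f) x0" and "\<And>i. isCont (hess (\<lambda>u. c u $ i)) x0" and "isCont (jac c) x0"
    and "\<And>k. stationary_P (e k) f A b c (X k) (YE k) (Y k) (Z k) (L k)"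
    and "X \<longlonglongrightarrow> x0" and "Y \<longlonglongrightarrow> y0" and "L \<longlonglongrightarrow> lam0"
    and "(\<lambda>k. dPsi_z (e k) (Y k) (Z k)) \<longlonglongrightarrow> \<eta>"
  shows "stationarity_residual f A c x0 y0 \<eta> lam0 = 0"
proof -
  have "(\<lambda>k. stationarity_residual f A c (X k) (Y k) (dPsi_z (e k) (Y k) (Z k)) (L k))
          \<longlonglongrightarrow> stationarity_residual f A c x0 y0 \<eta> lam0"
    by (rule tendsto_stationarity_residual[OF assms(1-3,5,6,8,7)])
  moreover have "stationarity_residual f A c (X k) (Y k) (dPsi_z (e k) (Y k) (Z k)) (L k) = 0" for k
    using assms(4) by (simp add: stationary_P_iff_residual)
  ultimately show ?thesis
    by (simp add: LIMSEQ_const_iff)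
qed

lemma stationarity_residual_eq_rowsub:
  assumes "\<And>i. i \<in> G \<Longrightarrow> d $ i = 1" and "\<And>i. i \<notin> B \<Longrightarrow> i \<notin> G \<Longrightarrow> d $ i = 0"
    and "B \<inter> G = {}"
  shows "stationarity_residual f A c x yI d lam =
    grad f x + ((\<Sum>j\<in>UNIV. yI $ j *\<^sub>R hess (\<lambda>u. c u $ j) x)
        - transpose A ** A
        - transpose (rowsub G (jac c x)) ** rowsub G (jac c x)
        - transpose (rowsub B (jac c x)) ** Diag d ** rowsub B (jac c x)) *v lam"
  using transpose_Diag_mult_split_rowsub[OF assms, of "jac c x"]
  unfolding stationarity_residual_def by (simp add: diff_diff_eq add.assoc)

lemma limit_of_stationary_points:
  fixes X :: "nat \<Rightarrow> real^'n" and Y Z :: "nat \<Rightarrow> real^'p"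
  assumes cont: "isCont (grad f) xs" "\<And>i. isCont (hess (\<lambda>u. c u $ i)) xs" "isCont (jac c) xs"
    and e: "\<And>k. 0 < e k" "e \<longlonglongrightarrow> 0"
    and stat: "\<And>k. stationary_P (e k) f A b c (X k) (YE k) (Y k) (Z k) (L k)"
    and lim: "X \<longlonglongrightarrow> xs" "Y \<longlonglongrightarrow> yIs" "Z \<longlonglongrightarrow> zIs" "L \<longlonglongrightarrow> lams"
    and lim_\<eta>: "(\<lambda>k. dPsi_z (e k) (Y k) (Z k)) \<longlonglongrightarrow> \<eta>"
  defines "\<beta> \<equiv> {i. yIs $ i = 0 \<and> zIs $ i = 0}"
    and "\<gamma> \<equiv> {i. yIs $ i > 0 \<and> zIs $ i = 0}"
  shows "grad f xs + ((\<Sum>j\<in>UNIV. yIs $ j *\<^sub>R hess (\<lambda>u. c u $ j) xs)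
        - transpose A ** A
        - transpose (rowsub \<gamma> (jac c xs)) ** rowsub \<gamma> (jac c xs)
        - transpose (rowsub \<beta> (jac c xs)) ** Diag \<eta> ** rowsub \<beta> (jac c xs)) *v lams = 0"
proof -
  have Theta: "psi (e k) (Y k $ i) (Z k $ i) = 0" for k i
    using stat by (simp add: stationary_P_def feasible_P_def)
  have "stationarity_residual f A c xs yIs \<eta> lams = 0"
    using stationarity_residual_limit_eq_0[OF cont stat lim(1,2,4) lim_\<eta>] .
  moreover have "stationarity_residual f A c xs yIs \<eta> lams =
    grad f xs + ((\<Sum>j\<in>UNIV. yIs $ j *\<^sub>R hess (\<lambda>u. c u $ j) xs)
        - transpose A ** A
        - transpose (rowsub \<gamma> (jac c xs)) ** rowsub \<gamma> (jac c xs)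
        - transpose (rowsub \<beta> (jac c xs)) ** Diag \<eta> ** rowsub \<beta> (jac c xs)) *v lams"
    using dPsi_z_limit[OF e Theta lim(2,3) lim_\<eta>]
    by (intro stationarity_residual_eq_rowsub) (auto simp: \<beta>_def \<gamma>_def)
  ultimately show ?thesis
    by simp
qed

theorem theorem4p2:
  fixes f :: "real^'n \<Rightarrow> real"
    and A :: "real^'n^'q" and b :: "real^'q"
    and c :: "real^'n \<Rightarrow> real^'p"
    and x :: "real \<Rightarrow> real^'n" and yE :: "real \<Rightarrow> real^'q"
    and yI zI :: "real \<Rightarrow> real^'p" and lam :: "real \<Rightarrow> real^'n"
    and xs :: "real^'n" and yEs :: "real^'q" and yIs zIs :: "real^'p" and lams :: "real^'n"
  assumes f_diff: "\<And>u. f differentiable (at u)"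
    and f_C1: "continuous_on UNIV (grad f)"
    and c_concave: "\<And>i. concave_on UNIV (\<lambda>u. c u $ i)"
    and c_diff: "\<And>i u. (\<lambda>v. c v $ i) differentiable (at u)"
    and c_diff2: "\<And>i u. grad (\<lambda>v. c v $ i) differentiable (at u)"
    and c_C2: "\<And>i. continuous_on UNIV (hess (\<lambda>v. c v $ i))"
    and stat: "\<And>e. e > 0 \<Longrightarrow> stationary_P e f A b c (x e) (yE e) (yI e) (zI e) (lam e)"
    and limsup: "\<exists>ep :: nat \<Rightarrow> real. (\<forall>k. ep k > 0) \<and> ep \<longlonglongrightarrow> 0 \<and>
        (\<lambda>k. x (ep k)) \<longlonglongrightarrow> xs \<and> (\<lambda>k. yE (ep k)) \<longlonglongrightarrow> yEs \<and>
        (\<lambda>k. yI (ep k)) \<longlonglongrightarrow> yIs \<and> (\<lambda>k. zI (ep k)) \<longlonglongrightarrow> zIs \<and>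
        (\<lambda>k. lam (ep k)) \<longlonglongrightarrow> lams"
  defines "\<beta> \<equiv> {i. yIs $ i = 0 \<and> zIs $ i = 0}"
    and "\<gamma> \<equiv> {i. yIs $ i > 0 \<and> zIs $ i = 0}"
  shows "\<exists>\<eta> :: real^'p. (\<forall>i. 0 \<le> \<eta> $ i \<and> \<eta> $ i \<le> 1) \<and>
     grad f xs + ((\<Sum>j\<in>UNIV. yIs $ j *\<^sub>R hess (\<lambda>u. c u $ j) xs)
        - transpose A ** A
        - transpose (rowsub \<gamma> (jac c xs)) ** rowsub \<gamma> (jac c xs)
        - transpose (rowsub \<beta> (jac c xs)) ** Diag \<eta> ** rowsub \<beta> (jac c xs)) *v lams = 0"
proof -
  obtain ep :: "nat \<Rightarrow> real" where ep: "\<And>k. ep k > 0" "ep \<longlonglongrightarrow> 0"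
    "(\<lambda>k. x (ep k)) \<longlonglongrightarrow> xs" "(\<lambda>k. yI (ep k)) \<longlonglongrightarrow> yIs" "(\<lambda>k. zI (ep k)) \<longlonglongrightarrow> zIs"
    "(\<lambda>k. lam (ep k)) \<longlonglongrightarrow> lams"
    using limsup by blast
  have stat_ep: "stationary_P (ep k) f A b c (x (ep k)) (yE (ep k)) (yI (ep k)) (zI (ep k)) (lam (ep k))"
    for k
    using stat ep(1) by blast
  then have "\<forall>k. dPsi_z (ep k) (yI (ep k)) (zI (ep k)) \<in> cbox 0 1"
    using ep(1) by (simp add: dPsi_z_mem_unit_box stationary_P_def feasible_P_def)
  then obtain \<eta> r where \<eta>: "\<eta> \<in> cbox 0 1" and r: "strict_mono r"
    and "((\<lambda>k. dPsi_z (ep k) (yI (ep k)) (zI (ep k))) \<circ> r) \<longlonglongrightarrow> \<eta>"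
    by (rule seq_compactE[OF compact_imp_seq_compact[OF compact_cbox]])
  then have lim_\<eta>: "(\<lambda>k. dPsi_z (ep (r k)) (yI (ep (r k))) (zI (ep (r k)))) \<longlonglongrightarrow> \<eta>"
    by (simp add: comp_def)
  have cont: "isCont (grad f) xs" "isCont (hess (\<lambda>u. c u $ i)) xs" "isCont (jac c) xs" for i
    using f_C1 c_C2 c_diff2
    by (simp_all add: continuous_on_eq_continuous_at isCont_jac differentiable_imp_continuous_within)
  have pos: "0 < ep (r k)" for k
    using ep(1) .
  note sub = ep(2-6)[THEN LIMSEQ_subseq_LIMSEQ[OF _ r], unfolded comp_def]
  show ?thesis
    using \<eta> limit_of_stationary_points[OF cont pos sub(1) stat_ep[of "r k" for k] sub(2-5) lim_\<eta>]
    unfolding \<beta>_def \<gamma>_def by (auto simp: mem_box_cart)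
qed

end
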